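(* Let $\bar f:[a,b]\to\mathbb{R}_\mathcal{I}$ be an interval-valued function with $\bar f(x)=\langle f_c(x);f_w(x)\rangle$. Then $\bar f$ is differentiable at $x\in[a,b]$ if and only if $f_c$ is differentiable at $x$ and $f_w$ is multiplicatively differentiable at $x$. Moreover, in that case $$\bar f'(x)=\langle f_c'(x);\,f_w^*(x)\rangle,$$ where $f_w^*(x)=\lim_{h\to0}\left(\frac{f_w(x+h)}{f_w(x)}\right)^{1/h}=e^{(\ln f_w)'(x)}$ is the multiplicative derivative of $f_w$ at $x$.
   Context: An interval number is a closed interval $\bar a=[a_l,a_r]$ with $a_l<a_r$ real; $\mathbb{R}_\mathcal{I}$ is the set of interval numbers. Write $a_c=(a_l+a_r)/2$, $a_w=(a_r-a_l)/2>0$ and $\bar a=\langle a_c;a_w\rangle=[a_c-a_w,a_c+a_w]$. Operations: $\bar a-\bar b=\langle a_c-b_c;a_w/b_w\rangle$, and for real $k$, $k\bar a=\langle ka_c;a_w^k\rangle$; for real $h\neq0$, $\bar c/h$ means $\langle c_c/h;\,c_w^{1/h}\rangle$. Distance: $d(\bar a,\bar b)=\sqrt{(a_c-b_c)^2+(\ln a_w-\ln b_w)^2}$, and limits in $\mathbb{R}_\mathcal{I}$ are taken with respect to $d$. For an interval-valued function $\bar f:[a,b]\to\mathbb{R}_\mathcal{I}$, $\bar f(x)=[f_l(x),f_r(x)]$, put $f_c=(f_l+f_r)/2$, $f_w=(f_r-f_l)/2$. $\bar f$ is differentiable at $x_0$ if there is $\bar f'(x_0)\in\mathbb{R}_\mathcal{I}$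 with $\bar f'(x_0)=\lim_{h\to0}\frac{\bar f(x_0+h)-\bar f(x_0)}{h}$ (with $x_0+h\in[a,b]$). A positive function $g$ is multiplicatively differentiable at $x$ if $g^*(x)=\lim_{h\to0}(g(x+h)/g(x))^{1/h}$ exists. *)

theory Defs
  imports "HOL-Analysis.Analysis"
begin

text \<open>Interval numbers in midpoint-radius form: a pair (c, w) stands for
  the interval [c - w, c + w]; valid interval numbers have w > 0.\<close>

type_synonym inum = "real \<times> real"

definition inums :: "inum set" where
  "inums = {p. snd p > 0}"

definition inum_minus :: "inum \<Rightarrow> inum \<Rightarrow> inum" where
  "inum_minus A B = (fst A - fst B, snd A / snd B)"

definition inum_div_real :: "inum \<Rightarrow> real \<Rightarrow> inum" where
  "inum_div_real C h = (fst C / h, snd C powr (1 / h))"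

definition inum_dist :: "inum \<Rightarrow> inum \<Rightarrow> real" where
  "inum_dist A B = sqrt ((fst A - fst B)^2 + (ln (snd A) - ln (snd B))^2)"

definition ivf_has_deriv ::
  "(real \<Rightarrow> real) \<Rightarrow> (real \<Rightarrow> real) \<Rightarrow> real \<Rightarrow> real \<Rightarrow> real \<Rightarrow> inum \<Rightarrow> bool" where
  "ivf_has_deriv fc fw a b x0 D \<longleftrightarrow>
     D \<in> inums \<and>
     ((\<lambda>h. inum_dist
             (inum_div_real (inum_minus (fc (x0 + h), fw (x0 + h)) (fc x0, fw x0)) h) D)
        \<longlongrightarrow> 0) (at 0 within {h. x0 + h \<in> {a..b}})"

definition ivf_differentiable ::
  "(real \<Rightarrow> real) \<Rightarrow> (real \<Rightarrow> real) \<Rightarrow> real \<Rightarrow> real \<Rightarrow> real \<Rightarrow> bool" where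
  "ivf_differentiable fc fw a b x0 \<longleftrightarrow> (\<exists>D. ivf_has_deriv fc fw a b x0 D)"

text \<open>Multiplicative derivative of a positive function g at x (relative to [a,b]):
  (g(x+h)/g(x)) powr (1/h) tends to L, where L is a positive real
  (the multiplicative derivative lives in the positive reals).\<close>
definition mult_has_deriv ::
  "(real \<Rightarrow> real) \<Rightarrow> real \<Rightarrow> real \<Rightarrow> real \<Rightarrow> real \<Rightarrow> bool" where
  "mult_has_deriv g a b x L \<longleftrightarrow>
     L > 0 \<and> ((\<lambda>h. (g (x + h) / g x) powr (1 / h)) \<longlongrightarrow> L) (at 0 within {h. x + h \<in> {a..b}})"

definition mult_differentiable :: "(real \<Rightarrow> real) \<Rightarrow> real \<Rightarrow> real \<Rightarrow> real \<Rightarrow> bool" where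
  "mult_differentiable g a b x \<longleftrightarrow> (\<exists>L. mult_has_deriv g a b x L)"

end

theory Submission imports Defs begin

text \<open>The distance on interval numbers is the Euclidean distance of the pairs
  (centre, ln width), and in these coordinates the difference quotient of
  \<open><f_c; f_w>\<close> is \<open>((f_c(x+h) - f_c(x))/h, (ln f_w(x+h) - ln f_w(x))/h)\<close>, the
  second component being the logarithm of the multiplicative difference quotient
  \<open>(f_w(x+h)/f_w(x)) powr (1/h)\<close>. Hence convergence splits into the ordinary
  differentiability of \<open>f_c\<close> and of \<open>ln f_w\<close>, the latter being multiplicative
  differentiability of \<open>f_w\<close> with \<open>f_w^* = exp ((ln f_w)')\<close>.\<close>

lemma at_within_to_0:
  fixes x :: real
  shows "at 0 within {h. x + h \<in> S} = filtermap (\<lambda>y. y - x) (at x within S)"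
proof -
  have "filtermap (\<lambda>y. y - x) (at x within S) = at (x - x) within (\<lambda>y. y - x) ` S"
  proof (rule filtermap_linear_at_within)
    show "bij (\<lambda>y. y - x)"
      by (rule bij_betwI') (auto intro: exI[of _ "_ + x"])
  qed (auto simp: open_translation_subtract)
  moreover have "(\<lambda>y. y - x) ` S = {h. x + h \<in> S}"
    by (force intro: image_eqI[where x = "x + _"])
  ultimately show ?thesis by simp
qed

lemma tendsto_at_within_to_0:
  fixes x :: real
  shows "((\<lambda>h. g (x + h)) \<longlongrightarrow> l) (at 0 within {h. x + h \<in> S}) \<longleftrightarrow> (g \<longlongrightarrow> l) (at x within S)"
  by (simp add: at_within_to_0 filterlim_filtermap)

lemma has_real_derivative_iff_quotient_at_0:
  "(f has_real_derivative D) (at x within S) \<longleftrightarrow>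
   ((\<lambda>h. (f (x + h) - f x) / h) \<longlongrightarrow> D) (at 0 within {h. x + h \<in> S})"
  unfolding has_field_derivative_iff
  using tendsto_at_within_to_0[of "\<lambda>y. (f y - f x) / (y - x)" x D S] by simp

lemma at_within_Icc_nontrivial:
  fixes a b x :: real
  assumes "a < b" and "x \<in> {a..b}"
  shows "at x within {a..b} \<noteq> bot"
  using assms by (simp add: trivial_limit_within islimpt_Icc)

lemma tendsto_Pair_iff:
  "((\<lambda>x. (f x, g x)) \<longlongrightarrow> (a, b)) F \<longleftrightarrow> (f \<longlongrightarrow> a) F \<and> (g \<longlongrightarrow> b) F"
  using tendsto_fst[of "\<lambda>x. (f x, g x)"] tendsto_snd[of "\<lambda>x. (f x, g x)"]
  by (auto intro: tendsto_Pair)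

lemma tendsto_ln_iff:
  fixes f :: "'a \<Rightarrow> real"
  assumes "L > 0" and f_pos: "\<forall>\<^sub>F x in F. f x > 0"
  shows "((\<lambda>x. ln (f x)) \<longlongrightarrow> ln L) F \<longleftrightarrow> (f \<longlongrightarrow> L) F"
proof
  assume "((\<lambda>x. ln (f x)) \<longlongrightarrow> ln L) F"
  then have "((\<lambda>x. exp (ln (f x))) \<longlongrightarrow> L) F"
    using tendsto_exp \<open>L > 0\<close> by fastforce
  moreover have "\<forall>\<^sub>F x in F. exp (ln (f x)) = f x"
    using f_pos by (rule eventually_mono) simp
  ultimately show "(f \<longlongrightarrow> L) F"
    by (rule Lim_transform_eventually)
qed (use assms in \<open>auto intro: tendsto_ln\<close>)

lemma ln_has_real_derivative_iff_mult_quotient: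
  assumes pos: "\<forall>t\<in>S. g t > 0" and "x \<in> S"
  shows "((\<lambda>t. ln (g t)) has_real_derivative c) (at x within S) \<longleftrightarrow>
    ((\<lambda>h. ln ((g (x + h) / g x) powr (1 / h))) \<longlongrightarrow> c) (at 0 within {h. x + h \<in> S})"
proof -
  have quotient_eq: "(ln (g (x + h)) - ln (g x)) / h = ln ((g (x + h) / g x) powr (1 / h))"
    if "x + h \<in> S" for h
    using pos[rule_format, OF that] pos[rule_format, OF \<open>x \<in> S\<close>]
    by (simp add: ln_powr ln_div)
  have "\<forall>\<^sub>F h in at 0 within {h. x + h \<in> S}.
      (ln (g (x + h)) - ln (g x)) / h = ln ((g (x + h) / g x) powr (1 / h))"
    unfolding eventually_at_filter by (intro always_eventually allI impI quotient_eq) simp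
  then show ?thesis
    unfolding has_real_derivative_iff_quotient_at_0 by (rule tendsto_cong)
qed

lemma mult_has_deriv_iff_ln_has_real_derivative:
  assumes pos: "\<forall>t\<in>{a..b}. g t > 0" and "x \<in> {a..b}"
  shows "mult_has_deriv g a b x L \<longleftrightarrow>
    L > 0 \<and> ((\<lambda>t. ln (g t)) has_real_derivative ln L) (at x within {a..b})"
proof -
  have "(g (x + h) / g x) powr (1 / h) > 0" if "x + h \<in> {a..b}" for h
    using pos[rule_format, OF that] pos[rule_format, OF \<open>x \<in> {a..b}\<close>] by simp
  then have quotient_pos:
    "\<forall>\<^sub>F h in at 0 within {h. x + h \<in> {a..b}}. (g (x + h) / g x) powr (1 / h) > 0"
    unfolding eventually_at_filter by (intro always_eventually allI impI) simp
  show ?thesis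
    unfolding mult_has_deriv_def ln_has_real_derivative_iff_mult_quotient[OF assms]
    using tendsto_ln_iff[OF _ quotient_pos] by blast
qed

lemma mult_has_deriv_unique:
  assumes "a < b" and pos: "\<forall>t\<in>{a..b}. g t > 0" and "x \<in> {a..b}"
    and "mult_has_deriv g a b x L" and "mult_has_deriv g a b x M"
  shows "L = M"
proof -
  have "L > 0" "M > 0"
    and "((\<lambda>t. ln (g t)) has_real_derivative ln L) (at x within {a..b})"
    and "((\<lambda>t. ln (g t)) has_real_derivative ln M) (at x within {a..b})"
    using assms mult_has_deriv_iff_ln_has_real_derivative[OF pos \<open>x \<in> {a..b}\<close>] by auto
  with at_within_Icc_nontrivial[OF \<open>a < b\<close> \<open>x \<in> {a..b}\<close>] show ?thesis
    using has_field_derivative_unique by (metis ln_inj_iff)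
qed

lemma ivf_has_deriv_iff:
  assumes pos: "\<forall>t\<in>{a..b}. fw t > 0" and "x \<in> {a..b}"
  shows "ivf_has_deriv fc fw a b x D \<longleftrightarrow>
    (fc has_real_derivative fst D) (at x within {a..b}) \<and> mult_has_deriv fw a b x (snd D)"
proof -
  let ?F = "at 0 within {h. x + h \<in> {a..b}}"
  let ?qc = "\<lambda>h. (fc (x + h) - fc x) / h"
  let ?qw = "\<lambda>h. ln ((fw (x + h) / fw x) powr (1 / h))"
  have "inum_dist (inum_div_real (inum_minus (fc (x + h), fw (x + h)) (fc x, fw x)) h) D =
      dist (?qc h, ?qw h) (fst D, ln (snd D))" for h
    by (simp add: inum_dist_def inum_div_real_def inum_minus_def dist_Pair_Pair dist_real_def)
  then have "ivf_has_deriv fc fw a b x D \<longleftrightarrow>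
      snd D > 0 \<and> (?qc \<longlongrightarrow> fst D) ?F \<and> (?qw \<longlongrightarrow> ln (snd D)) ?F"
    by (simp add: ivf_has_deriv_def inums_def tendsto_dist_iff[symmetric] tendsto_Pair_iff)
  then show ?thesis
    unfolding mult_has_deriv_iff_ln_has_real_derivative[OF assms]
      ln_has_real_derivative_iff_mult_quotient[OF assms]
    unfolding has_real_derivative_iff_quotient_at_0 by blast
qed

theorem theorem4p2:
  fixes fc fw :: "real \<Rightarrow> real" and a b x :: real
  assumes "a < b"
    and "\<forall>t\<in>{a..b}. fw t > 0"
    and "x \<in> {a..b}"
  shows "(ivf_differentiable fc fw a b x \<longleftrightarrow>
            fc differentiable (at x within {a..b}) \<and> mult_differentiable fw a b x)
         \<and> (\<forall>Dc L. (fc has_real_derivative Dc) (at x within {a..b}) \<and> mult_has_deriv fw a b x L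
              \<longrightarrow> (\<forall>D. ivf_has_deriv fc fw a b x D \<longleftrightarrow> D = (Dc, L))
                  \<and> ((\<lambda>t. ln (fw t)) has_real_derivative ln L) (at x within {a..b}))"
proof (intro conjI allI impI)
  show "ivf_differentiable fc fw a b x \<longleftrightarrow>
      fc differentiable (at x within {a..b}) \<and> mult_differentiable fw a b x"
    unfolding ivf_differentiable_def ivf_has_deriv_iff[OF assms(2,3)]
      real_differentiable_def mult_differentiable_def
    by force
next
  fix Dc L
  assume deriv: "(fc has_real_derivative Dc) (at x within {a..b}) \<and> mult_has_deriv fw a b x L"
  then show "((\<lambda>t. ln (fw t)) has_real_derivative ln L) (at x within {a..b})"
    using mult_has_deriv_iff_ln_has_real_derivative[OF assms(2,3)] by blast
  fix D
  show "ivf_has_deriv fc fw a b x D \<longleftrightarrow> D = (Dc, L)"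
    unfolding ivf_has_deriv_iff[OF assms(2,3)]
    using deriv mult_has_deriv_unique[OF assms]
      has_field_derivative_unique[OF _ _ at_within_Icc_nontrivial[OF assms(1,3)]]
    by (cases D) auto
qed

end
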